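(* Let $n_1,n_2$ be distinct odd primes with $\gcd(n_1-1,n_2-1)=6$, $n=n_1n_2$, and let $D_0,\dots,D_5$ be the Whiteman generalized cyclotomic classes of order 6 modulo $n$ (see context). Let $q$ be a power of a prime $p$ with $\gcd(q,n)=1$, and let $\beta$ be a primitive $n$-th root of unity in an extension of $\mathrm{GF}(q)$. Let $N_1=\{n_1,\dots,(n_2-1)n_1\}$, $N_2=\{n_2,\dots,(n_1-1)n_2\}$, and $S(x)=\sum_{i\in N_1\cup D_0\cup D_1\cup D_2}x^i$, $T(x)=\sum_{i\in N_1\cup D_1\cup D_2\cup D_3}x^i$, $M(x)=\sum_{i\in N_1\cup D_2\cup D_3\cup D_4}x^i$ in $\mathrm{GF}(q)[x]$. Then for $a\in\mathbb{Z}_n$: (1) $S(\beta^a)=T(\beta^a)=M(\beta^a)=-\frac{n_1+1}{2}\bmod p$ if $a\in N_1$, and $=\frac{n_2-1}{2}\bmod p$ if $a\in N_2$; (2) $S(\beta^a)$ equals $S(\beta),\ T(\beta),\ M(\beta),\ -(S(\beta)+1),\ -(T(\beta)+1),\ -(M(\beta)+1)$ according as $a\in D_0,D_1,D_2,D_3,D_4,D_5$ respectively; (3) $T(\beta^a)$ equals $T(\beta),\ M(\beta),\ -(S(\beta)+1),\ -(T(\beta)+1),\ -(M(\beta)+1),\ S(\beta)$ according as $a\in D_0,D_1,D_2,D_3,D_4,D_5$ respectively; (4) $M(\beta^a)$ equals $M(\beta),\ -(S(\beta)+1),\ -(T(\beta)+1),\ -(M(\beta)+1),\ S(\beta),\ T(\beta)$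 according as $a\in D_0,D_1,D_2,D_3,D_4,D_5$ respectively.
   Context: Let $e=(n_1-1)(n_2-1)/6$, $g$ a common primitive root of $n_1$ and $n_2$, $u$ an integer with $u\equiv g\pmod{n_1}$, $u\equiv 1\pmod{n_2}$, and $D_i=\{g^su^i\bmod n: s=0,\dots,e-1\}$ for $i=0,\dots,5$; these partition $\mathbb{Z}_n^*$. An integer "mod $p$" denotes its image in the prime field $\mathrm{GF}(p)$. *)

theory Defs
  imports "HOL-Number_Theory.Number_Theory"
begin

definition wh_e :: "nat \<Rightarrow> nat \<Rightarrow> nat" where
  "wh_e n1 n2 = (n1 - 1) * (n2 - 1) div 6"

definition wh_D :: "nat \<Rightarrow> nat \<Rightarrow> nat \<Rightarrow> nat \<Rightarrow> nat \<Rightarrow> nat set" where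
  "wh_D n1 n2 g u i = {(g ^ s * u ^ i) mod (n1 * n2) | s. s < wh_e n1 n2}"

definition wh_N1 :: "nat \<Rightarrow> nat \<Rightarrow> nat set" where
  "wh_N1 n1 n2 = {n1 * j | j. 1 \<le> j \<and> j \<le> n2 - 1}"

definition wh_N2 :: "nat \<Rightarrow> nat \<Rightarrow> nat set" where
  "wh_N2 n1 n2 = {n2 * j | j. 1 \<le> j \<and> j \<le> n1 - 1}"

definition gen_poly :: "nat set \<Rightarrow> 'a::comm_ring_1 \<Rightarrow> 'a" where
  "gen_poly A x = (\<Sum>i\<in>A. x ^ i)"

definition wh_S :: "nat \<Rightarrow> nat \<Rightarrow> nat \<Rightarrow> nat \<Rightarrow> 'a::comm_ring_1 \<Rightarrow> 'a" where
  "wh_S n1 n2 g u = gen_poly (wh_N1 n1 n2 \<union> wh_D n1 n2 g u 0 \<union> wh_D n1 n2 g u 1 \<union> wh_D n1 n2 g u 2)"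

definition wh_T :: "nat \<Rightarrow> nat \<Rightarrow> nat \<Rightarrow> nat \<Rightarrow> 'a::comm_ring_1 \<Rightarrow> 'a" where
  "wh_T n1 n2 g u = gen_poly (wh_N1 n1 n2 \<union> wh_D n1 n2 g u 1 \<union> wh_D n1 n2 g u 2 \<union> wh_D n1 n2 g u 3)"

definition wh_M :: "nat \<Rightarrow> nat \<Rightarrow> nat \<Rightarrow> nat \<Rightarrow> 'a::comm_ring_1 \<Rightarrow> 'a" where
  "wh_M n1 n2 g u = gen_poly (wh_N1 n1 n2 \<union> wh_D n1 n2 g u 2 \<union> wh_D n1 n2 g u 3 \<union> wh_D n1 n2 g u 4)"

end

theory Submission
  imports Defs
begin

text \<open>
  Write \<open>\<eta>\<^sub>j = \<Sum>\<^sub>i\<^sub>\<in>\<^sub>D\<^sub>j \<beta>\<^sup>i\<close> for the Gauss periods.  The classes \<open>D\<^sub>j\<close> are the cosets of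
  \<open>D\<^sub>0\<close> in \<open>\<int>\<^sub>n\<^sup>*\<close> with \<open>D\<^sub>j D\<^sub>k = D\<^sub>j\<^sub>+\<^sub>k\<close> (indices mod 6), so for \<open>a \<in> D\<^sub>k\<close> substituting
  \<open>\<beta>\<^sup>a\<close> just rotates the periods: \<open>\<eta>\<^sub>j(\<beta>\<^sup>a) = \<eta>\<^sub>j\<^sub>+\<^sub>k\<close>.  Each of \<open>S, T, M\<close> is the
  \<open>N\<^sub>1\<close>-part plus a window of three consecutive periods, the \<open>N\<^sub>1\<close>-part being
  \<open>-1\<close> at every \<open>\<beta>\<^sup>a\<close> with \<open>a\<close> a unit; and since \<open>\<Sum>\<^sub>j \<eta>\<^sub>j = 1\<close> (all \<open>n\<close>-th roots
  sum to 0), the window starting at \<open>j + 3\<close> takes the value \<open>-(w + 1)\<close> if the one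
  starting at \<open>j\<close> takes the value \<open>w\<close>.  For \<open>a \<in> N\<^sub>1\<close> (resp. \<open>N\<^sub>2\<close>) the point \<open>\<beta>\<^sup>a\<close>
  is a primitive \<open>n\<^sub>2\<close>-th (resp. \<open>n\<^sub>1\<close>-th) root of unity; modulo that prime \<open>g\<close> is a
  primitive root, so every period runs \<open>e/(n\<^sub>2-1)\<close> (resp. \<open>e/(n\<^sub>1-1)\<close>) times over all
  nontrivial such roots and equals minus that number.
\<close>

lemma power_mod_exponent:
  fixes x :: "'a::monoid_mult"
  assumes "x ^ m = 1"
  shows "x ^ (y mod m) = x ^ y"
proof -
  have "x ^ y = x ^ (m * (y div m) + y mod m)" by simp
  also have "\<dots> = (x ^ m) ^ (y div m) * x ^ (y mod m)" by (simp only: power_add power_mult)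
  finally show ?thesis using assms by simp
qed

lemma power_cong_exponent:
  fixes x :: "'a::monoid_mult"
  assumes "x ^ m = 1" and "[y = z] (mod m)"
  shows "x ^ y = x ^ z"
  using assms power_mod_exponent[OF assms(1)] by (metis cong_def)

lemma sum_nontrivial_powers_root_of_unity:
  fixes x :: "'a::field"
  assumes "x ^ m = 1" and "x \<noteq> 1" and "m > 0"
  shows "(\<Sum>t\<in>{0<..<m}. x ^ t) = -1"
proof -
  have "{..<m} = insert 0 {0<..<m}" using assms(3) by auto
  moreover have "(\<Sum>t<m. x ^ t) = 0" using geometric_sum[OF assms(2), of m] assms(1) by simp
  ultimately show ?thesis by (simp add: add_eq_0_iff)
qed

text \<open>The powers of a primitive root run once through \<open>{1, \<dots>, p - 1}\<close>.\<close>
lemma sum_root_of_unity_primroot_powers: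
  fixes x :: "'a::field"
  assumes "prime p" and "residue_primroot p g" and "x ^ p = 1" and "x \<noteq> 1"
  shows "(\<Sum>s<p - 1. x ^ (g ^ s)) = -1"
proof -
  have bij: "bij_betw (\<lambda>s. g ^ s mod p) {..<p - 1} {0<..<p}"
    using residue_primroot_is_generator[of p g] assms(1,2)
    using prime_gt_1_nat[OF assms(1)] by (simp add: totient_prime totatives_prime)
  have "(\<Sum>s<p - 1. x ^ (g ^ s)) = (\<Sum>s<p - 1. x ^ (g ^ s mod p))"
    using power_mod_exponent[OF assms(3)] by simp
  also have "\<dots> = (\<Sum>t\<in>{0<..<p}. x ^ t)"
    using sum.reindex_bij_betw[OF bij, of "\<lambda>t. x ^ t"] .
  also have "\<dots> = -1"
    using sum_nontrivial_powers_root_of_unity assms(1,3,4) prime_gt_0_nat by blast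
  finally show ?thesis .
qed

lemma sum_lessThan_add:
  fixes h :: "nat \<Rightarrow> 'a::comm_monoid_add"
  shows "(\<Sum>s<m + P. h s) = (\<Sum>s<m. h s) + (\<Sum>s<P. h (s + m))"
proof -
  have "(\<Sum>s<m + P. h s) = (\<Sum>s\<in>{0..<m}. h s) + (\<Sum>s\<in>{m..<m + P}. h s)"
    using sum.atLeastLessThan_concat[of 0 m "m + P" h] by (simp add: atLeast0LessThan)
  also have "(\<Sum>s\<in>{m..<m + P}. h s) = (\<Sum>s<P. h (s + m))"
    using sum.shift_bounds_nat_ivl[of h 0 m P] by (simp add: atLeast0LessThan add.commute)
  finally show ?thesis by (simp add: atLeast0LessThan)
qed

lemma sum_periodic_shift:
  fixes f :: "nat \<Rightarrow> 'a::cancel_comm_monoid_add"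
  assumes "\<And>s. f (s + P) = f s"
  shows "(\<Sum>s<P. f (s + k)) = (\<Sum>s<P. f s)"
proof (induction k)
  case (Suc k)
  have "f k + (\<Sum>s<P. f (Suc s + k)) = (\<Sum>s<P. f (s + k)) + f (P + k)"
    using sum.lessThan_Suc_shift[of "\<lambda>s. f (s + k)" P] by (simp add: add.commute)
  also have "f (P + k) = f k" using assms[of k] by (simp add: add.commute)
  finally show ?case using Suc by (simp add: add.commute)
qed simp

lemma sum_rotate_mod:
  fixes f :: "nat \<Rightarrow> 'a::cancel_comm_monoid_add"
  shows "(\<Sum>j<m. f ((i + j) mod m)) = (\<Sum>j<m. f j)"
  using sum_periodic_shift[of "\<lambda>j. f (j mod m)" m i] by (simp add: add.commute)

lemma sum_periodic_multiple:
  fixes f :: "nat \<Rightarrow> 'a::comm_semiring_1_cancel"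
  assumes periodic: "\<And>s. f (s + P) = f s"
  shows "(\<Sum>s<c * P. f (s + k)) = of_nat c * (\<Sum>s<P. f s)"
proof (induction c)
  case (Suc c)
  have "(\<Sum>s<Suc c * P. f (s + k)) = (\<Sum>s<c * P. f (s + k)) + (\<Sum>s<P. f (s + c * P + k))"
    using sum_lessThan_add[of "\<lambda>s. f (s + k)" "c * P" P] by (simp add: add.commute)
  also have "(\<Sum>s<P. f (s + c * P + k)) = (\<Sum>s<P. f s)"
    using sum_periodic_shift[of f P "c * P + k", OF periodic] by (simp add: add.assoc)
  finally show ?case using Suc by (simp add: algebra_simps)
qed simp

lemma sum_root_of_unity_primroot_powers_multiple:
  fixes x :: "'a::field"
  assumes "prime p" and "residue_primroot p g" and "x ^ p = 1" and "x \<noteq> 1"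
  shows "(\<Sum>s<c * (p - 1). x ^ (g ^ (s + k))) = - of_nat c"
proof -
  have "ord p g = p - 1"
    using assms(1,2) by (simp add: residue_primroot_def totient_prime)
  then have "[g ^ (s + (p - 1)) = g ^ s] (mod p)" for s
    using order_divides_expdiff[of p g] assms(2) by (simp add: residue_primroot_def cong_def)
  then have "(\<Sum>s<c * (p - 1). x ^ (g ^ (s + k))) = of_nat c * (\<Sum>s<p - 1. x ^ (g ^ s))"
    using power_cong_exponent[OF assms(3)] by (intro sum_periodic_multiple) blast
  then show ?thesis using sum_root_of_unity_primroot_powers[OF assms] by simp
qed

lemma coprime_prime_right_iff:
  fixes x p :: nat
  assumes "prime p"
  shows "coprime x p \<longleftrightarrow> \<not> p dvd x"
  using assms by (metis coprime_commute prime_imp_coprime coprime_common_divisor dvd_refl not_prime_unit)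

lemma not_dvd_prime_mult:
  fixes p q j :: nat
  assumes "prime p" "prime q" "p \<noteq> q" "0 < j" "j < p"
  shows "\<not> p dvd q * j"
  using assms by (metis dvd_imp_le prime_dvd_mult_iff primes_dvd_imp_eq leD)

lemma gen_poly_Un_disjoint:
  "finite A \<Longrightarrow> finite B \<Longrightarrow> A \<inter> B = {} \<Longrightarrow> gen_poly (A \<union> B) x = gen_poly A x + gen_poly B x"
  unfolding gen_poly_def by (rule sum.union_disjoint)

locale whiteman =
  fixes n1 n2 g u :: nat
  assumes prime1: "prime n1" and prime2: "prime n2" and distinct: "n1 \<noteq> n2"
    and gcd_pred: "gcd (n1 - 1) (n2 - 1) = 6"
    and primroot1: "residue_primroot n1 g" and primroot2: "residue_primroot n2 g"
    and u_cong1: "[u = g] (mod n1)" and u_cong2: "[u = 1] (mod n2)"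
begin

abbreviation n where "n \<equiv> n1 * n2"
abbreviation e where "e \<equiv> wh_e n1 n2"
abbreviation D where "D \<equiv> wh_D n1 n2 g u"

lemma six_dvd_n1_minus_1: "6 dvd n1 - 1" and six_dvd_n2_minus_1: "6 dvd n2 - 1"
  using gcd_pred by (metis gcd_dvd1, metis gcd_dvd2)

lemma n1_ge_7: "n1 \<ge> 7" and n2_ge_7: "n2 \<ge> 7"
proof -
  have "n1 - 1 \<noteq> 0" "n2 - 1 \<noteq> 0" using prime1 prime2 prime_gt_1_nat by fastforce+
  then have "6 \<le> n1 - 1" "6 \<le> n2 - 1" using six_dvd_n1_minus_1 six_dvd_n2_minus_1 dvd_imp_le by blast+
  then show "n1 \<ge> 7" "n2 \<ge> 7" by auto
qed

lemma n_gt_1: "n > 1"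
  using n1_ge_7 n2_ge_7 by (simp add: one_less_mult)

lemma coprime_n1_n2: "coprime n1 n2"
  using prime1 prime2 distinct by (simp add: primes_coprime)

lemma e_eq1: "e = (n1 - 1) div 6 * (n2 - 1)" and e_eq2: "e = (n2 - 1) div 6 * (n1 - 1)"
  using six_dvd_n1_minus_1 six_dvd_n2_minus_1 unfolding wh_e_def by (auto elim!: dvdE)

lemma e_pos: "e > 0"
  using n1_ge_7 n2_ge_7 by (simp add: e_eq1)

lemma ord_g1: "ord n1 g = n1 - 1" and ord_g2: "ord n2 g = n2 - 1"
  using primroot1 primroot2 prime1 prime2 by (simp_all add: residue_primroot_def totient_prime)

lemma power_g_cong_iff1: "[g ^ s = g ^ t] (mod n1) \<longleftrightarrow> [s = t] (mod (n1 - 1))"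
  using order_divides_expdiff primroot1 ord_g1 by (simp add: residue_primroot_def)

lemma power_g_cong_iff2: "[g ^ s = g ^ t] (mod n2) \<longleftrightarrow> [s = t] (mod (n2 - 1))"
  using order_divides_expdiff primroot2 ord_g2 by (simp add: residue_primroot_def)

lemma ord_g: "ord n g = e"
proof -
  have "(n1 - 1) * (n2 - 1) = 6 * lcm (n1 - 1) (n2 - 1)"
    using prod_gcd_lcm_nat[of "n1 - 1" "n2 - 1"] unfolding gcd_pred .
  then show ?thesis
    using ord_modulus_mult_coprime[OF coprime_n1_n2] ord_g1 ord_g2 unfolding wh_e_def by simp
qed

lemma coprime_g: "coprime n g"
  using primroot1 primroot2 by (simp add: residue_primroot_def)

lemma coprime_u: "coprime n u"
proof -
  have "coprime n1 u"
    using u_cong1 primroot1 by (metis cong_imp_coprime cong_sym coprime_commute residue_primroot_def)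
  moreover have "coprime n2 u"
    using u_cong2 by (metis cong_imp_coprime cong_sym coprime_1_left coprime_commute)
  ultimately show ?thesis by simp
qed

lemma power_g_cong_iff: "[g ^ s = g ^ t] (mod n) \<longleftrightarrow> [s = t] (mod e)"
  using order_divides_expdiff[OF coprime_g] by (simp add: ord_g)

text \<open>Bezout with \<open>gcd (n\<^sub>1 - 1) (n\<^sub>2 - 1) = 6\<close> makes \<open>u\<^sup>6\<close> a power of \<open>g\<close> modulo both primes.\<close>
lemma u_pow_6: "\<exists>r. [u ^ 6 = g ^ r] (mod n)"
proof -
  have "n2 - 1 \<noteq> 0" using n2_ge_7 by simp
  from bezout_nat[OF this, of "n1 - 1"] obtain x y
    where xy: "(n2 - 1) * x = (n1 - 1) * y + 6" using gcd_pred by (auto simp: gcd.commute)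
  have "[g ^ 6 = g ^ ((n2 - 1) * x)] (mod n1)"
    unfolding power_g_cong_iff1 xy by (simp add: cong_def)
  moreover have "[g ^ 0 = g ^ ((n2 - 1) * x)] (mod n2)"
    unfolding power_g_cong_iff2 by (simp add: cong_def)
  moreover have "[u ^ 6 = g ^ 6] (mod n1)" "[u ^ 6 = 1 ^ 6] (mod n2)"
    using cong_pow[OF u_cong1, of 6] cong_pow[OF u_cong2, of 6] by simp_all
  ultimately have "[u ^ 6 = g ^ ((n2 - 1) * x)] (mod n1)" "[u ^ 6 = g ^ ((n2 - 1) * x)] (mod n2)"
    by (auto intro: cong_trans)
  then show ?thesis using coprime_cong_mult_nat[OF _ _ coprime_n1_n2] by blast
qed

lemma class_eq_image: "D j = (\<lambda>s. g ^ s * u ^ j mod n) ` {..<e}"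
  unfolding wh_D_def by auto

lemma mem_class: "g ^ m * u ^ l mod n \<in> D (l mod 6)"
proof -
  obtain r where r: "[u ^ 6 = g ^ r] (mod n)" using u_pow_6 by blast
  define s where "s = m + r * (l div 6)"
  have "u ^ l = (u ^ 6) ^ (l div 6) * u ^ (l mod 6)"
    by (metis div_mult_mod_eq power_add power_mult mult.commute)
  then have "[g ^ m * u ^ l = g ^ s * u ^ (l mod 6)] (mod n)"
    using cong_mult[OF cong_refl[of "g ^ m"] cong_mult[OF cong_pow[OF r, of "l div 6"] cong_refl]]
    by (simp add: s_def power_add power_mult mult.assoc)
  also have "[g ^ s * u ^ (l mod 6) = g ^ (s mod e) * u ^ (l mod 6)] (mod n)"
    using power_g_cong_iff[of s "s mod e"] by (intro cong_mult[OF _ cong_refl]) (simp add: cong_def)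
  finally show ?thesis
    using e_pos unfolding wh_D_def cong_def by fastforce
qed

lemma inj_on_class: "inj_on (\<lambda>s. g ^ s * u ^ j mod n) {..<e}"
proof
  fix s t assume st: "s \<in> {..<e}" "t \<in> {..<e}" "g ^ s * u ^ j mod n = g ^ t * u ^ j mod n"
  have "coprime (u ^ j) n" using coprime_u by (simp add: coprime_commute)
  then have "[g ^ s = g ^ t] (mod n)"
    using st(3) cong_mult_lcancel_nat by (metis cong_def mult.commute)
  then show "s = t" using st(1,2) cong_less_modulus_unique_nat power_g_cong_iff by auto
qed

lemma card_class: "card (D j) = e"
  unfolding class_eq_image using card_image[OF inj_on_class] by simp

lemma finite_class: "finite (D j)"
  unfolding class_eq_image by simp

lemma class_subset_totatives: "D j \<subseteq> totatives n"
proof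
  fix x assume "x \<in> D j"
  then obtain s where x: "x = g ^ s * u ^ j mod n" unfolding class_eq_image by auto
  have "coprime (g ^ s * u ^ j) n" using coprime_g coprime_u by (simp add: coprime_commute)
  then have "coprime x n" unfolding x using n_gt_1 by (metis coprime_mod_left_iff gr_implies_not0)
  moreover have "x < n" unfolding x using n_gt_1 by (intro mod_less_divisor) linarith
  moreover have "x \<noteq> 0" using \<open>coprime x n\<close> n_gt_1 by (intro notI) simp
  ultimately show "x \<in> totatives n" by (simp add: in_totatives_iff)
qed

lemma class_rep_cong1: "[g ^ s * u ^ i = g ^ (s + i)] (mod n1)"
  using cong_mult[OF cong_refl[of "g ^ s"] cong_pow[OF u_cong1, of i]] by (simp add: power_add)

lemma class_rep_cong2: "[g ^ s * u ^ i = g ^ s] (mod n2)"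
  using cong_mult[OF cong_refl[of "g ^ s"] cong_pow[OF u_cong2, of i]] by simp

lemma classes_disjoint:
  assumes "i < 6" and "j < 6" and "x \<in> D i" and "x \<in> D j"
  shows "i = j"
proof -
  obtain s where "x = g ^ s * u ^ i mod n" using assms(3) unfolding class_eq_image by auto
  moreover obtain t where "x = g ^ t * u ^ j mod n" using assms(4) unfolding class_eq_image by auto
  ultimately have "[g ^ s * u ^ i = g ^ t * u ^ j] (mod n)" by (simp add: cong_def)
  then have "[g ^ s * u ^ i = g ^ t * u ^ j] (mod n1)" "[g ^ s * u ^ i = g ^ t * u ^ j] (mod n2)"
    using cong_modulus_mult_nat[of _ _ n1 n2] cong_modulus_mult_nat[of _ _ n2 n1]
    by (auto simp: mult.commute)
  then have "[g ^ (s + i) = g ^ (t + j)] (mod n1)" "[g ^ s = g ^ t] (mod n2)"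
    using class_rep_cong1 class_rep_cong2 by (metis cong_sym cong_trans)+
  then have "[s + i = t + j] (mod 6)" "[s = t] (mod 6)"
    unfolding power_g_cong_iff1 power_g_cong_iff2
    using six_dvd_n1_minus_1 six_dvd_n2_minus_1 cong_dvd_modulus_nat by blast+
  then have "[i = j] (mod 6)"
    by (metis cong_add_lcancel_nat cong_add_rcancel_nat add.commute cong_trans cong_sym)
  then show ?thesis using assms(1,2) cong_less_modulus_unique_nat by blast
qed

lemma totatives_eq_classes: "totatives n = (\<Union>j<6. D j)"
proof -
  have "card (\<Union>j<6. D j) = (\<Sum>j<6. card (D j))"
    by (rule card_UN_disjoint) (auto simp: finite_class dest: classes_disjoint)
  also have "\<dots> = (n1 - 1) * (n2 - 1)"
    using six_dvd_n1_minus_1 by (simp add: card_class wh_e_def)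
  also have "\<dots> = card (totatives n)"
    using totient_mult_coprime[OF coprime_n1_n2] prime1 prime2
    unfolding totient_def[symmetric] by (simp add: totient_prime)
  finally show ?thesis
    using class_subset_totatives by (intro card_subset_eq[symmetric]) auto
qed

lemma bij_betw_mult_class:
  assumes "a \<in> D k"
  shows "bij_betw (\<lambda>i. a * i mod n) (D j) (D ((j + k) mod 6))"
proof -
  have "coprime a n" using assms class_subset_totatives in_totatives_iff by blast
  then have inj: "inj_on (\<lambda>i. a * i mod n) (D j)"
    using class_subset_totatives[of j] n_gt_1
    by (intro inj_onI) (metis cong_def cong_mult_lcancel_nat cong_less_modulus_unique_nat
        coprime_commute in_totatives_iff subsetD totatives_less)
  obtain t where t: "a = g ^ t * u ^ k mod n" using assms unfolding class_eq_image by auto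
  have "a * (g ^ s * u ^ j mod n) mod n = g ^ (t + s) * u ^ (j + k) mod n" for s
    unfolding t by (simp add: mod_mult_eq power_add algebra_simps)
  then have "(\<lambda>i. a * i mod n) ` D j \<subseteq> D ((j + k) mod 6)"
    using mem_class unfolding class_eq_image[of j] by auto
  moreover have "card ((\<lambda>i. a * i mod n) ` D j) = card (D ((j + k) mod 6))"
    using card_image[OF inj] card_class by simp
  ultimately show ?thesis
    using inj card_subset_eq[OF finite_class] by (simp add: bij_betw_def)
qed

lemma wh_N1_eq_image: "wh_N1 n1 n2 = (\<lambda>j. n1 * j) ` {0<..<n2}"
  unfolding wh_N1_def using prime_gt_1_nat[OF prime2] by force

lemma wh_N2_eq_image: "wh_N2 n1 n2 = (\<lambda>j. n2 * j) ` {0<..<n1}"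
  unfolding wh_N2_def using prime_gt_1_nat[OF prime1] by force

lemma mem_wh_N1_iff: "x \<in> wh_N1 n1 n2 \<longleftrightarrow> 0 < x \<and> x < n \<and> n1 dvd x \<and> \<not> n2 dvd x"
proof
  assume "x \<in> wh_N1 n1 n2"
  then obtain j where "x = n1 * j" "j \<in> {0<..<n2}" unfolding wh_N1_eq_image by (rule imageE)
  then show "0 < x \<and> x < n \<and> n1 dvd x \<and> \<not> n2 dvd x"
    using not_dvd_prime_mult[OF prime2 prime1 distinct[symmetric]] prime_gt_0_nat[OF prime1]
    by simp
next
  assume "0 < x \<and> x < n \<and> n1 dvd x \<and> \<not> n2 dvd x"
  then show "x \<in> wh_N1 n1 n2" unfolding wh_N1_eq_image by (auto elim!: dvdE)
qed

lemma mem_wh_N2_iff: "x \<in> wh_N2 n1 n2 \<longleftrightarrow> 0 < x \<and> x < n \<and> n2 dvd x \<and> \<not> n1 dvd x"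
proof
  assume "x \<in> wh_N2 n1 n2"
  then obtain j where "x = n2 * j" "j \<in> {0<..<n1}" unfolding wh_N2_eq_image by (rule imageE)
  then show "0 < x \<and> x < n \<and> n2 dvd x \<and> \<not> n1 dvd x"
    using not_dvd_prime_mult[OF prime1 prime2 distinct] prime_gt_0_nat[OF prime2]
    by simp
next
  assume "0 < x \<and> x < n \<and> n2 dvd x \<and> \<not> n1 dvd x"
  then show "x \<in> wh_N2 n1 n2" unfolding wh_N2_eq_image by (auto elim!: dvdE)
qed

lemma mem_totatives_iff: "x \<in> totatives n \<longleftrightarrow> 0 < x \<and> x < n \<and> \<not> n1 dvd x \<and> \<not> n2 dvd x"
  unfolding in_totatives_iff coprime_mult_right_iff
    coprime_prime_right_iff[OF prime1] coprime_prime_right_iff[OF prime2]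
  by (auto simp: le_less)

lemma lessThan_partition: "{..<n} = insert 0 (wh_N1 n1 n2 \<union> wh_N2 n1 n2 \<union> totatives n)"
proof -
  have no_common: "\<not> (n1 dvd x \<and> n2 dvd x)" if "0 < x" "x < n" for x
  proof
    assume "n1 dvd x \<and> n2 dvd x"
    then have "n dvd x" using divides_mult primes_coprime[OF prime1 prime2 distinct] by blast
    then show False using that dvd_imp_le by fastforce
  qed
  have "0 < n" using prime_gt_0_nat[OF prime1] prime_gt_0_nat[OF prime2] by simp
  show ?thesis
  proof (rule Set.set_eqI)
    fix x
    show "x \<in> {..<n} \<longleftrightarrow> x \<in> insert 0 (wh_N1 n1 n2 \<union> wh_N2 n1 n2 \<union> totatives n)"
    proof (cases "x = 0")
      case False
      then have "0 < x" by simp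
      then show ?thesis
        using no_common[of x] unfolding insert_iff Un_iff lessThan_iff mem_wh_N1_iff mem_wh_N2_iff mem_totatives_iff
        by blast
    qed (use \<open>0 < n\<close> in simp)
  qed
qed

lemma gen_poly_wh_N1: "gen_poly (wh_N1 n1 n2) x = (\<Sum>j\<in>{0<..<n2}. (x ^ n1) ^ j)"
proof -
  have "inj_on (\<lambda>j. n1 * j) {0<..<n2}" using n1_ge_7 by (simp add: inj_on_def)
  then show ?thesis unfolding gen_poly_def wh_N1_eq_image by (simp add: sum.reindex power_mult)
qed

lemma gen_poly_wh_N2: "gen_poly (wh_N2 n1 n2) x = (\<Sum>j\<in>{0<..<n1}. (x ^ n2) ^ j)"
proof -
  have "inj_on (\<lambda>j. n2 * j) {0<..<n1}" using n2_ge_7 by (simp add: inj_on_def)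
  then show ?thesis unfolding gen_poly_def wh_N2_eq_image by (simp add: sum.reindex power_mult)
qed

lemma gen_poly_class: "x ^ n = 1 \<Longrightarrow> gen_poly (D k) x = (\<Sum>s<e. x ^ (g ^ s * u ^ k))"
  unfolding gen_poly_def class_eq_image
  by (simp add: sum.reindex[OF inj_on_class] power_mod_exponent)

definition window :: "nat \<Rightarrow> 'b::comm_ring_1 \<Rightarrow> 'b" where
  "window i = gen_poly (wh_N1 n1 n2 \<union> D (i mod 6) \<union> D ((i + 1) mod 6) \<union> D ((i + 2) mod 6))"

lemma window_add_6: "window (i + 6) = window i"
proof -
  have "(i + 6) mod 6 = i mod 6" "(i + 6 + 1) mod 6 = (i + 1) mod 6" "(i + 6 + 2) mod 6 = (i + 2) mod 6"
    by presburger+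
  then show ?thesis unfolding window_def by (simp only:)
qed

lemma window_split: "window i x = gen_poly (wh_N1 n1 n2) x
    + gen_poly (D (i mod 6)) x + gen_poly (D ((i + 1) mod 6)) x + gen_poly (D ((i + 2) mod 6)) x"
proof -
  have "finite (wh_N1 n1 n2)" unfolding wh_N1_eq_image by simp
  moreover have "wh_N1 n1 n2 \<inter> D j = {}" for j
    using class_subset_totatives mem_wh_N1_iff mem_totatives_iff by blast
  moreover have "D (a mod 6) \<inter> D (b mod 6) = {}" if "a mod 6 \<noteq> b mod 6" for a b
    using classes_disjoint that by (meson disjoint_iff mod_less_divisor zero_less_numeral)
  moreover have "i mod 6 \<noteq> (i + 1) mod 6" "i mod 6 \<noteq> (i + 2) mod 6" "(i + 1) mod 6 \<noteq> (i + 2) mod 6"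
    by presburger+
  ultimately show ?thesis
    unfolding window_def by (simp add: gen_poly_Un_disjoint finite_class Int_Un_distrib2)
qed

lemma wh_S_eq_window: "wh_S n1 n2 g u = window 0"
  and wh_T_eq_window: "wh_T n1 n2 g u = window 1"
  and wh_M_eq_window: "wh_M n1 n2 g u = window 2"
proof -
  have "(0::nat) mod 6 = 0" "(0 + 1::nat) mod 6 = 1" "(0 + 2::nat) mod 6 = 2"
    "(1::nat) mod 6 = 1" "(1 + 1::nat) mod 6 = 2" "(1 + 2::nat) mod 6 = 3"
    "(2::nat) mod 6 = 2" "(2 + 1::nat) mod 6 = 3" "(2 + 2::nat) mod 6 = 4"
    by presburger+
  then show "wh_S n1 n2 g u = window 0" "wh_T n1 n2 g u = window 1" "wh_M n1 n2 g u = window 2"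
    unfolding window_def wh_S_def wh_T_def wh_M_def by (simp_all only:)
qed

end

locale whiteman_root = whiteman +
  fixes \<beta> :: "'a::field"
  assumes root: "\<beta> ^ (n1 * n2) = 1"
    and primitive: "\<forall>j. 0 < j \<and> j < n1 * n2 \<longrightarrow> \<beta> ^ j \<noteq> 1"
begin

abbreviation \<eta> where "\<eta> j \<equiv> gen_poly (D j) \<beta>"

lemma power_eq_1_iff: "\<beta> ^ m = 1 \<longleftrightarrow> n dvd m"
proof
  assume "\<beta> ^ m = 1"
  then have "\<beta> ^ (m mod n) = 1" using power_mod_exponent[OF root] by simp
  moreover have "m mod n < n" using n_gt_1 by (intro mod_less_divisor) linarith
  ultimately show "n dvd m" using primitive by (auto simp: dvd_eq_mod_eq_0)
next
  assume "n dvd m"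
  then obtain t where "m = n * t" by (rule dvdE)
  then show "\<beta> ^ m = 1" using root by (simp add: power_mult)
qed

lemma gen_poly_wh_N1_power:
  assumes "\<not> n2 dvd a"
  shows "gen_poly (wh_N1 n1 n2) (\<beta> ^ a) = -1"
proof -
  have "((\<beta> ^ a) ^ n1) ^ n2 = 1"
    using power_eq_1_iff by (simp flip: power_mult)
  moreover have "(\<beta> ^ a) ^ n1 \<noteq> 1"
    using assms n1_ge_7 by (simp add: power_eq_1_iff flip: power_mult)
  ultimately show ?thesis
    unfolding gen_poly_wh_N1 using n2_ge_7 by (intro sum_nontrivial_powers_root_of_unity) auto
qed

lemma gen_poly_wh_N1_power_dvd:
  assumes "n2 dvd a"
  shows "gen_poly (wh_N1 n1 n2) (\<beta> ^ a) = of_nat (n2 - 1)"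
proof -
  have "(\<beta> ^ a) ^ n1 = 1"
    using assms by (simp add: power_eq_1_iff mult.commute flip: power_mult)
  then show ?thesis unfolding gen_poly_wh_N1 by simp
qed

lemma gen_poly_wh_N2_root: "gen_poly (wh_N2 n1 n2) \<beta> = -1"
proof -
  have "(\<beta> ^ n2) ^ n1 = 1" and "\<beta> ^ n2 \<noteq> 1"
    using n1_ge_7 n2_ge_7 by (simp_all add: power_eq_1_iff nat_dvd_not_less flip: power_mult)
  then show ?thesis
    unfolding gen_poly_wh_N2 using n1_ge_7 by (intro sum_nontrivial_powers_root_of_unity) auto
qed

lemma sum_periods: "(\<Sum>j<6. \<eta> j) = 1"
proof -
  have "\<beta> \<noteq> 1" using power_eq_1_iff[of 1] n_gt_1 by auto
  then have "0 = (\<Sum>i<n. \<beta> ^ i)" using geometric_sum[of \<beta> n] root by simp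
  also have "\<dots> = 1 + gen_poly (wh_N1 n1 n2) \<beta> + gen_poly (wh_N2 n1 n2) \<beta> + gen_poly (totatives n) \<beta>"
  proof -
    have "finite (wh_N1 n1 n2)" "finite (wh_N2 n1 n2)"
      unfolding wh_N1_eq_image wh_N2_eq_image by simp_all
    moreover have "wh_N1 n1 n2 \<inter> wh_N2 n1 n2 = {}" "(wh_N1 n1 n2 \<union> wh_N2 n1 n2) \<inter> totatives n = {}"
      "0 \<notin> wh_N1 n1 n2 \<union> wh_N2 n1 n2 \<union> totatives n"
      by (auto simp: mem_wh_N1_iff mem_wh_N2_iff mem_totatives_iff)
    ultimately show ?thesis
      unfolding lessThan_partition gen_poly_def by (simp add: sum.union_disjoint add.assoc)
  qed
  also have "gen_poly (totatives n) \<beta> = (\<Sum>j<6. \<eta> j)"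
    unfolding gen_poly_def totatives_eq_classes
    by (rule sum.UNION_disjoint) (auto simp: finite_class dest: classes_disjoint)
  finally show ?thesis
    using gen_poly_wh_N1_power[of 1] gen_poly_wh_N2_root n2_ge_7 by (simp add: algebra_simps)
qed

lemma power_pow_n_eq_1: "(\<beta> ^ a) ^ n = 1"
  by (metis mult.commute power_mult power_one root)

lemma period_at_wh_N1:
  assumes "a \<in> wh_N1 n1 n2"
  shows "gen_poly (D k) (\<beta> ^ a) = - of_nat ((n1 - 1) div 6)"
proof -
  have a: "n1 dvd a" "0 < a" "a < n" using assms by (auto simp: mem_wh_N1_iff)
  have root2: "(\<beta> ^ a) ^ n2 = 1" using a(1) by (simp add: power_eq_1_iff flip: power_mult)
  have "\<beta> ^ a \<noteq> 1" using a primitive by blast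
  have "gen_poly (D k) (\<beta> ^ a) = (\<Sum>s<e. (\<beta> ^ a) ^ (g ^ s * u ^ k))"
    by (rule gen_poly_class[OF power_pow_n_eq_1])
  also have "\<dots> = (\<Sum>s<(n1 - 1) div 6 * (n2 - 1). (\<beta> ^ a) ^ (g ^ (s + 0)))"
    unfolding e_eq1 using power_cong_exponent[OF root2 class_rep_cong2] by simp
  also have "\<dots> = - of_nat ((n1 - 1) div 6)"
    by (rule sum_root_of_unity_primroot_powers_multiple[OF prime2 primroot2 root2 \<open>\<beta> ^ a \<noteq> 1\<close>])
  finally show ?thesis .
qed

lemma period_at_wh_N2:
  assumes "a \<in> wh_N2 n1 n2"
  shows "gen_poly (D k) (\<beta> ^ a) = - of_nat ((n2 - 1) div 6)"
proof -
  have a: "n2 dvd a" "0 < a" "a < n" using assms by (auto simp: mem_wh_N2_iff)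
  have root1: "(\<beta> ^ a) ^ n1 = 1" using a(1) by (simp add: power_eq_1_iff mult.commute flip: power_mult)
  have "\<beta> ^ a \<noteq> 1" using a primitive by blast
  have "gen_poly (D k) (\<beta> ^ a) = (\<Sum>s<e. (\<beta> ^ a) ^ (g ^ s * u ^ k))"
    by (rule gen_poly_class[OF power_pow_n_eq_1])
  also have "\<dots> = (\<Sum>s<(n2 - 1) div 6 * (n1 - 1). (\<beta> ^ a) ^ (g ^ (s + k)))"
    unfolding e_eq2 using power_cong_exponent[OF root1 class_rep_cong1] by simp
  also have "\<dots> = - of_nat ((n2 - 1) div 6)"
    by (rule sum_root_of_unity_primroot_powers_multiple[OF prime1 primroot1 root1 \<open>\<beta> ^ a \<noteq> 1\<close>])
  finally show ?thesis .
qed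

lemma period_at_class:
  assumes "a \<in> D k"
  shows "gen_poly (D j) (\<beta> ^ a) = \<eta> ((j + k) mod 6)"
proof -
  have "gen_poly (D j) (\<beta> ^ a) = (\<Sum>i\<in>D j. \<beta> ^ (a * i mod n))"
    unfolding gen_poly_def using power_mod_exponent[OF root] by (simp add: power_mult)
  also have "\<dots> = \<eta> ((j + k) mod 6)"
    unfolding gen_poly_def using sum.reindex_bij_betw[OF bij_betw_mult_class[OF assms]] .
  finally show ?thesis .
qed

lemma window_at_class:
  assumes "a \<in> D k"
  shows "window i (\<beta> ^ a) = window (i + k) \<beta>"
proof -
  have "\<not> n2 dvd a" using assms class_subset_totatives mem_totatives_iff by blast
  then have "gen_poly (wh_N1 n1 n2) (\<beta> ^ a) = gen_poly (wh_N1 n1 n2) \<beta>"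
    using gen_poly_wh_N1_power[of a] gen_poly_wh_N1_power[of 1] n2_ge_7 by simp
  then show ?thesis
    unfolding window_split period_at_class[OF assms] by (simp add: mod_simps ac_simps)
qed

lemma window_add_3: "window (i + 3) \<beta> = - (window i \<beta> + 1)"
proof -
  have "window i \<beta> + window (i + 3) \<beta> = 2 * gen_poly (wh_N1 n1 n2) \<beta> + (\<Sum>j<6. \<eta> ((i + j) mod 6))"
    unfolding window_split by (simp add: lessThan_nat_numeral add.assoc algebra_simps)
  also have "\<dots> = -1"
    using gen_poly_wh_N1_power[of 1] n2_ge_7 sum_rotate_mod[where f = "\<lambda>j. \<eta> j" and m = 6 and i = i] sum_periods by simp
  finally show ?thesis by (simp add: algebra_simps eq_neg_iff_add_eq_0)
qed

lemma window_at_wh_N1: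
  assumes "a \<in> wh_N1 n1 n2"
  shows "window i (\<beta> ^ a) = of_int (- ((int n1 + 1) div 2))"
proof -
  obtain c where c: "n1 - 1 = 6 * c" using six_dvd_n1_minus_1 by (rule dvdE)
  have "\<not> n2 dvd a" using assms by (simp add: mem_wh_N1_iff)
  then have "window i (\<beta> ^ a) = -1 - 3 * of_nat c"
    unfolding window_split period_at_wh_N1[OF assms] gen_poly_wh_N1_power[OF \<open>\<not> n2 dvd a\<close>] c
    by simp
  moreover have "(int n1 + 1) div 2 = 3 * int c + 1" using c n1_ge_7 by simp
  ultimately show ?thesis by simp
qed

lemma window_at_wh_N2:
  assumes "a \<in> wh_N2 n1 n2"
  shows "window i (\<beta> ^ a) = of_int ((int n2 - 1) div 2)"
proof -
  obtain c where c: "n2 - 1 = 6 * c" using six_dvd_n2_minus_1 by (rule dvdE)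
  have "n2 dvd a" using assms by (simp add: mem_wh_N2_iff)
  then have "window i (\<beta> ^ a) = 3 * of_nat c"
    unfolding window_split period_at_wh_N2[OF assms] gen_poly_wh_N1_power_dvd[OF \<open>n2 dvd a\<close>] c
    by simp
  moreover have "(int n2 - 1) div 2 = 3 * int c" using c n2_ge_7 by simp
  ultimately show ?thesis by (simp only: of_int_mult of_int_of_nat_eq of_int_numeral)
qed

end

theorem lemma4:
  fixes n1 n2 g u p q k :: nat and \<beta> :: "'a::field"
  assumes "prime n1" and "prime n2" and "odd n1" and "odd n2" and "n1 \<noteq> n2"
    and "gcd (n1 - 1) (n2 - 1) = 6"
    and "residue_primroot n1 g" and "residue_primroot n2 g"
    and "[u = g] (mod n1)" and "[u = 1] (mod n2)"
    and "prime p" and "k \<ge> 1" and "q = p ^ k" and "coprime q (n1 * n2)"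
    and "CHAR('a) = p"
    and "card {x::'a. x ^ q = x} = q"
    and "\<beta> ^ (n1 * n2) = 1" and "\<forall>j. 0 < j \<and> j < n1 * n2 \<longrightarrow> \<beta> ^ j \<noteq> 1"
  shows
   "\<forall>a < n1 * n2.
     let S = wh_S n1 n2 g u; T = wh_T n1 n2 g u; M = wh_M n1 n2 g u; D = wh_D n1 n2 g u in
     (a \<in> wh_N1 n1 n2 \<longrightarrow>
        S (\<beta> ^ a) = of_int (- ((int n1 + 1) div 2)) \<and>
        T (\<beta> ^ a) = of_int (- ((int n1 + 1) div 2)) \<and>
        M (\<beta> ^ a) = of_int (- ((int n1 + 1) div 2))) \<and>
     (a \<in> wh_N2 n1 n2 \<longrightarrow>
        S (\<beta> ^ a) = of_int ((int n2 - 1) div 2) \<and>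
        T (\<beta> ^ a) = of_int ((int n2 - 1) div 2) \<and>
        M (\<beta> ^ a) = of_int ((int n2 - 1) div 2)) \<and>
     (a \<in> D 0 \<longrightarrow> S (\<beta> ^ a) = S \<beta> \<and> T (\<beta> ^ a) = T \<beta> \<and> M (\<beta> ^ a) = M \<beta>) \<and>
     (a \<in> D 1 \<longrightarrow> S (\<beta> ^ a) = T \<beta> \<and> T (\<beta> ^ a) = M \<beta> \<and> M (\<beta> ^ a) = - (S \<beta> + 1)) \<and>
     (a \<in> D 2 \<longrightarrow> S (\<beta> ^ a) = M \<beta> \<and> T (\<beta> ^ a) = - (S \<beta> + 1) \<and> M (\<beta> ^ a) = - (T \<beta> + 1)) \<and>
     (a \<in> D 3 \<longrightarrow> S (\<beta> ^ a) = - (S \<beta> + 1) \<and> T (\<beta> ^ a) = - (T \<beta> + 1) \<and> M (\<beta> ^ a) = - (M \<beta> + 1)) \<and>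
     (a \<in> D 4 \<longrightarrow> S (\<beta> ^ a) = - (T \<beta> + 1) \<and> T (\<beta> ^ a) = - (M \<beta> + 1) \<and> M (\<beta> ^ a) = S \<beta>) \<and>
     (a \<in> D 5 \<longrightarrow> S (\<beta> ^ a) = - (M \<beta> + 1) \<and> T (\<beta> ^ a) = S \<beta> \<and> M (\<beta> ^ a) = T \<beta>)"
proof -
  interpret whiteman_root n1 n2 g u \<beta>
    using assms(1,2,5-10,17,18) by unfold_locales simp_all
  have wrap: "window 3 \<beta> = - (window 0 \<beta> + 1)" "window 4 \<beta> = - (window 1 \<beta> + 1)"
    "window 5 \<beta> = - (window 2 \<beta> + 1)" "window 6 = window 0" "window 7 = window 1"
    using window_add_3[of 0] window_add_3[of 1] window_add_3[of 2]
      window_add_6[of 0] window_add_6[of 1] by simp_all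
  show ?thesis
    unfolding Let_def wh_S_eq_window wh_T_eq_window wh_M_eq_window
    \<comment> \<open>Numerals must not be unfolded into \<open>Suc\<close>-terms, or the indices \<open>i + k\<close> miss \<open>wrap\<close>.\<close>
    by (simp add: window_at_wh_N1 window_at_wh_N2 wrap window_at_class[where k = 0]
        window_at_class[where k = 1] window_at_class[where k = 2] window_at_class[where k = 3]
        window_at_class[where k = 4] window_at_class[where k = 5] del: One_nat_def add_2_eq_Suc add_2_eq_Suc')
qed

end
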